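(* For every $n \geq 3$, letting $C_n$ denote the cycle of length $n$, ${\rm ML}^{\rm W}(C_n)=3$ if $n=3$, and ${\rm ML}^{\rm W}(C_n)=2n-6$ if $n\geq 4$.
   Context: A walk of a graph $G$ is a sequence of vertices $u_0u_1\dots u_p$ with $u_tu_{t+1}\in E(G)$ for all $t$ (vertices and edges may repeat); its length is $p$. For a walk $W$ of $G$, $G+W$ is the multigraph on $V(G)$ whose edge multiset consists of $E(G)$ together with each edge added as many times as $W$ traverses it. A multigraph is locally irregular if no two adjacent vertices have the same degree; a walk is irregularising if $G+W$ is locally irregular. ${\rm ML}^{\rm W}(G)$ denotes the minimum length of an irregularising walk of $G$ (a walk of length $0$ is allowed). *)

theory Defs
  imports Main
begin

text \<open>A simple graph is given by a vertex set V and a set E of edges,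
  each edge being a 2-element subset of V.\<close>

definition cycle_edges :: "nat \<Rightarrow> nat set set" where
  "cycle_edges n = {{i, (i + 1) mod n} | i. i < n}"

definition cycle_verts :: "nat \<Rightarrow> nat set" where
  "cycle_verts n = {0..<n}"

definition is_walk :: "'a set \<Rightarrow> 'a set set \<Rightarrow> 'a list \<Rightarrow> bool" where
  "is_walk V E w \<longleftrightarrow> w \<noteq> [] \<and> set w \<subseteq> V \<and>
     (\<forall>t. Suc t < length w \<longrightarrow> {w ! t, w ! Suc t} \<in> E)"

definition walk_length :: "'a list \<Rightarrow> nat" where
  "walk_length w = length w - 1"

definition mult_plus_walk :: "'a set set \<Rightarrow> 'a list \<Rightarrow> 'a set \<Rightarrow> nat" where
  "mult_plus_walk E w e =
     (if e \<in> E then 1 else 0) + card {t. Suc t < length w \<and> {w ! t, w ! Suc t} = e}"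

definition deg_plus_walk :: "'a set set \<Rightarrow> 'a list \<Rightarrow> 'a \<Rightarrow> nat" where
  "deg_plus_walk E w v = (\<Sum>e\<in>{e\<in>E. v \<in> e}. mult_plus_walk E w e)"

definition irregularising :: "'a set \<Rightarrow> 'a set set \<Rightarrow> 'a list \<Rightarrow> bool" where
  "irregularising V E w \<longleftrightarrow> is_walk V E w \<and>
     (\<forall>u v. {u, v} \<in> E \<longrightarrow> u \<noteq> v \<longrightarrow> deg_plus_walk E w u \<noteq> deg_plus_walk E w v)"

definition MLW :: "'a set \<Rightarrow> 'a set set \<Rightarrow> nat" where
  "MLW V E = (LEAST p. \<exists>w. irregularising V E w \<and> walk_length w = p)"

end

(*
  For a walk W of C_n let x_j be the number of traversals of the edge {j, j+1} (indices mod n).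
  In C_n + W the vertex j has degree 2 + x_(j-1) + x_j, so W is irregularising iff
  x_j \<noteq> x_(j+2) for all j, and the length of W is the sum of the x_j.

  Lower bound: x_(j-1) + x_j can be odd only at the two ends of W. Two untraversed edges cut the
  cycle into two arcs, one of which W never enters; together with x_j \<noteq> x_(j+2) this
  leaves at most two j with x_j = 0. Going around the cycle, the parity of x falls (odd to even)
  as often as it rises, and each change makes a vertex odd, so there is at most one fall. If
  x_j = 1 then either x_(j+2) \<ge> 3 or x_(j+2) is even and the parity falls at j or j+1; hence
  there are at most two more ones than values \<ge> 3, and summing min(x_j, 3) gives
  sum x_j \<ge> 2n - 6. For n = 3 the three x_j are pairwise distinct, so their sum is at least 3.

  Upper bound: for n \<ge> 4 and m = n - 2, a walk on the path 0, ..., m realises the loads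
  2^s (1 1 3 3)^k 1 1 2^t (s \<le> 2, t \<le> 1) on the edges 0, ..., m - 1 and leaves the two
  remaining edges untraversed; its length is 2m - 2 = 2n - 6. For n = 3 the walk 1 2 0 2 has
  loads 0, 1, 2.
*)

theory Submission
  imports Defs
begin

section \<open>Traversal counts of a walk\<close>

lemma card_Collect_less_eq_sum: "card {j. j < (n::nat) \<and> P j} = (\<Sum>j<n. if P j then 1 else 0)"
proof -
  have "{j. j < n \<and> P j} = {j \<in> {..<n}. P j}"
    by auto
  then show ?thesis
    by (simp only: card_eq_sum sum.inter_filter[OF finite_lessThan])
qed

lemma card_steps_eq_sum:
  "card {t. Suc t < length w \<and> P t} = (\<Sum>t<length w - 1. if P t then 1 else 0)"
  using card_Collect_less_eq_sum[of "length w - 1" P] by (simp add: less_diff_conv)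

definition traversals :: "'a list \<Rightarrow> 'a set \<Rightarrow> nat" where
  "traversals w e = card {t. Suc t < length w \<and> {w ! t, w ! Suc t} = e}"

lemma traversals_eq_sum:
  "traversals w e = (\<Sum>t<length w - 1. if {w ! t, w ! Suc t} = e then 1 else 0)"
  unfolding traversals_def by (rule card_steps_eq_sum)

lemma traversals_Nil [simp]: "traversals [] e = 0"
  by (simp add: traversals_def)

lemma traversals_singleton [simp]: "traversals [a] e = 0"
  by (simp add: traversals_def)

lemma traversals_Cons_Cons:
  "traversals (a # b # w) e = (if {a, b} = e then 1 else 0) + traversals (b # w) e"
  unfolding traversals_eq_sum by (simp add: sum.lessThan_Suc_shift del: sum.lessThan_Suc)

lemma traversals_Cons:
  "traversals (a # w) e = (if w \<noteq> [] \<and> {a, hd w} = e then 1 else 0) + traversals w e"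
  by (cases w) (simp_all add: traversals_Cons_Cons)

lemma traversals_append:
  "traversals (v @ w) e = traversals v e + traversals w e
     + (if v \<noteq> [] \<and> w \<noteq> [] \<and> {last v, hd w} = e then 1 else 0)"
  by (induction v) (auto simp: traversals_Cons)

lemma traversals_rev: "traversals (rev w) e = traversals w e"
  by (induction w) (auto simp: traversals_append traversals_Cons last_rev insert_commute)

lemma sum_traversals:
  assumes "finite F"
  shows "(\<Sum>e\<in>F. traversals w e) = card {t. Suc t < length w \<and> {w ! t, w ! Suc t} \<in> F}"
proof -
  have "(\<Sum>e\<in>F. traversals w e)
      = (\<Sum>t<length w - 1. \<Sum>e\<in>F. if {w ! t, w ! Suc t} = e then 1 else 0)"
    unfolding traversals_eq_sum by (rule sum.swap)
  also have "\<dots> = (\<Sum>t<length w - 1. if {w ! t, w ! Suc t} \<in> F then 1 else 0)"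
    using assms by (simp add: sum.delta)
  finally show ?thesis
    by (simp add: card_steps_eq_sum)
qed

lemma sum_traversals_eq_walk_length:
  assumes "is_walk V E w" "finite E"
  shows "(\<Sum>e\<in>E. traversals w e) = walk_length w"
proof -
  have "{t. Suc t < length w \<and> {w ! t, w ! Suc t} \<in> E} = {..<walk_length w}"
    using assms(1) unfolding is_walk_def walk_length_def by auto
  then show ?thesis
    using assms(2) by (simp add: sum_traversals)
qed

lemma mult_plus_walk_eq: "e \<in> E \<Longrightarrow> mult_plus_walk E w e = 1 + traversals w e"
  by (simp add: mult_plus_walk_def traversals_def)

lemma deg_plus_walk_eq:
  "deg_plus_walk E w v = card {e \<in> E. v \<in> e} + (\<Sum>e\<in>{e \<in> E. v \<in> e}. traversals w e)"
proof -
  have "deg_plus_walk E w v = (\<Sum>e\<in>{e \<in> E. v \<in> e}. 1 + traversals w e)"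
    unfolding deg_plus_walk_def by (rule sum.cong) (auto simp: mult_plus_walk_eq)
  also have "\<dots> = card {e \<in> E. v \<in> e} + (\<Sum>e\<in>{e \<in> E. v \<in> e}. traversals w e)"
    by (simp only: sum.distrib card_eq_sum)
  finally show ?thesis .
qed

lemma traversals_pos: "Suc t < length w \<Longrightarrow> 0 < traversals w {w ! t, w ! Suc t}"
proof -
  have "finite {s. Suc s < length w \<and> {w ! s, w ! Suc s} = {w ! t, w ! Suc t}}"
    by (rule finite_subset[of _ "{..<length w}"]) auto
  moreover assume "Suc t < length w"
  ultimately show ?thesis
    unfolding traversals_def by (subst card_gt_0_iff) auto
qed

lemma traversals_eq_0_if_outside:
  assumes "\<forall>u\<in>set w. P u" "v \<in> e" "\<not> P v"
  shows "traversals w e = 0"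
proof -
  have "{w ! t, w ! Suc t} \<noteq> e" if "Suc t < length w" for t
    using assms nth_mem[of t w] nth_mem[of "Suc t" w] that by auto
  then show ?thesis
    unfolding traversals_def by (metis (mono_tags, lifting) card.empty empty_Collect_eq)
qed

lemma pred_nth_iff_pred_nth_0:
  assumes "\<forall>t. Suc t < length w \<longrightarrow> (P (w ! t) \<longleftrightarrow> P (w ! Suc t))" "t < length w"
  shows "P (w ! t) \<longleftrightarrow> P (w ! 0)"
  using assms(2) by (induction t) (use assms(1) in auto)

lemma walk_no_loop:
  assumes "is_walk V E w" "\<forall>u. {u} \<notin> E" "Suc t < length w"
  shows "w ! t \<noteq> w ! Suc t"
  using assms unfolding is_walk_def by force

lemma even_incident_traversals_plus_ends:
  assumes walk: "is_walk V E w" and "finite E" "\<forall>u. {u} \<notin> E"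
  shows "even ((\<Sum>e\<in>{e \<in> E. v \<in> e}. traversals w e)
    + (if hd w = v then 1 else 0) + (if last w = v then 1 else 0))"
proof -
  define p where "p = length w - 1"
  define f where "f t = (if w ! t = v then 1 else (0::nat))" for t
  have "(\<Sum>e\<in>{e \<in> E. v \<in> e}. traversals w e)
      = card {t. Suc t < length w \<and> {w ! t, w ! Suc t} \<in> {e \<in> E. v \<in> e}}"
    using \<open>finite E\<close> by (simp add: sum_traversals)
  also have "\<dots> = card {t. Suc t < length w \<and> v \<in> {w ! t, w ! Suc t}}"
    using walk unfolding is_walk_def by (intro arg_cong[where f = card]) auto
  also have "\<dots> = (\<Sum>t<p. f t + f (Suc t))"
    unfolding card_steps_eq_sum p_def f_def
  proof (intro sum.cong refl)
    fix t assume "t \<in> {..<length w - 1}"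
    then have "w ! t \<noteq> w ! Suc t"
      using walk_no_loop[OF walk \<open>\<forall>u. {u} \<notin> E\<close>] by simp
    then show "(if v \<in> {w ! t, w ! Suc t} then 1 else 0)
        = (if w ! t = v then 1 else 0) + (if w ! Suc t = v then 1 else (0::nat))"
      by auto
  qed
  also have "\<dots> = (\<Sum>t<p. f t) + (\<Sum>t<p. f (Suc t))"
    by (rule sum.distrib)
  finally have "(\<Sum>e\<in>{e \<in> E. v \<in> e}. traversals w e) + f 0 + f p = 2 * (\<Sum>t<Suc p. f t)"
    using sum.lessThan_Suc_shift[of f p] by simp
  moreover have "hd w = w ! 0" "last w = w ! p"
    using walk unfolding is_walk_def p_def by (simp_all add: hd_conv_nth last_conv_nth)
  ultimately show ?thesis
    unfolding f_def by (metis dvd_triv_left)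
qed

section \<open>The cycle\<close>

definition cyc_succ :: "nat \<Rightarrow> nat \<Rightarrow> nat" where
  "cyc_succ n i = (if Suc i = n then 0 else Suc i)"

definition cyc_pred :: "nat \<Rightarrow> nat \<Rightarrow> nat" where
  "cyc_pred n i = (if i = 0 then n - 1 else i - 1)"

definition cyc_edge :: "nat \<Rightarrow> nat \<Rightarrow> nat set" where
  "cyc_edge n i = {i, cyc_succ n i}"

lemma cyc_succ_lt: "i < n \<Longrightarrow> cyc_succ n i < n"
  by (auto simp: cyc_succ_def)

lemma cyc_pred_lt: "i < n \<Longrightarrow> cyc_pred n i < n"
  by (auto simp: cyc_pred_def)

lemma cyc_succ_pred: "i < n \<Longrightarrow> cyc_succ n (cyc_pred n i) = i"
  by (auto simp: cyc_succ_def cyc_pred_def)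

lemma cyc_pred_succ: "i < n \<Longrightarrow> cyc_pred n (cyc_succ n i) = i"
  by (auto simp: cyc_succ_def cyc_pred_def)

lemma cyc_succ_neq: "2 \<le> n \<Longrightarrow> cyc_succ n i \<noteq> i"
  by (auto simp: cyc_succ_def)

lemma cyc_succ_succ:
  "2 \<le> n \<Longrightarrow> i < n \<Longrightarrow>
    cyc_succ n (cyc_succ n i) = (if Suc (Suc i) < n then Suc (Suc i) else Suc (Suc i) - n)"
  by (auto simp: cyc_succ_def)

lemma inj_on_cyc_succ: "inj_on (cyc_succ n) {..<n}"
proof (rule inj_onI)
  fix i j assume ij: "i \<in> {..<n}" "j \<in> {..<n}" and eq: "cyc_succ n i = cyc_succ n j"
  have "i = cyc_pred n (cyc_succ n i)"
    using ij(1) by (simp add: cyc_pred_succ)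
  also have "\<dots> = j"
    using ij(2) by (simp add: eq cyc_pred_succ)
  finally show "i = j" .
qed

lemma sum_cyc_succ: "(\<Sum>j<n. f (cyc_succ n j)) = (\<Sum>j<n. f j)"
  by (rule sum.reindex_bij_witness[where i = "cyc_pred n" and j = "cyc_succ n"])
    (simp_all add: cyc_pred_succ cyc_succ_pred cyc_succ_lt cyc_pred_lt)

lemma cyc_edge_eq: "Suc i < n \<Longrightarrow> cyc_edge n i = {i, Suc i}"
  by (simp add: cyc_edge_def cyc_succ_def)

lemma cycle_edges_eq: "cycle_edges n = cyc_edge n ` {..<n}"
proof -
  have "Suc i mod n = cyc_succ n i" if "i < n" for i
    using that by (auto simp: cyc_succ_def)
  then show ?thesis
    unfolding cycle_edges_def cyc_edge_def by fastforce
qed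

lemma cyc_edge_in_cycle_edges: "i < n \<Longrightarrow> cyc_edge n i \<in> cycle_edges n"
  by (simp add: cycle_edges_eq)

lemma cycle_edges_no_loop: "2 \<le> n \<Longrightarrow> {u} \<notin> cycle_edges n"
proof
  assume "2 \<le> n" "{u} \<in> cycle_edges n"
  then obtain i where "{i, cyc_succ n i} = {u}"
    by (auto simp: cycle_edges_eq cyc_edge_def)
  then have "cyc_succ n i = i"
    by (auto simp: doubleton_eq_iff)
  then show False
    using cyc_succ_neq[OF \<open>2 \<le> n\<close>] by blast
qed

lemma cyc_succ_succ_neq: "3 \<le> n \<Longrightarrow> i < n \<Longrightarrow> cyc_succ n (cyc_succ n i) \<noteq> i"
  by (auto simp: cyc_succ_succ)

lemma inj_on_cyc_edge:
  assumes "3 \<le> n"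
  shows "inj_on (cyc_edge n) {..<n}"
proof (rule inj_onI, rule ccontr)
  fix i j assume ij: "i \<in> {..<n}" "j \<in> {..<n}" "cyc_edge n i = cyc_edge n j" "i \<noteq> j"
  then have "i = cyc_succ n j" "cyc_succ n i = j"
    unfolding cyc_edge_def doubleton_eq_iff by blast+
  then show False
    using cyc_succ_succ_neq[OF assms] ij(2) by blast
qed

lemma incident_cyc_edges:
  assumes "3 \<le> n" "v < n"
  shows "{e \<in> cycle_edges n. v \<in> e} = {cyc_edge n (cyc_pred n v), cyc_edge n v}"
proof
  show "{e \<in> cycle_edges n. v \<in> e} \<subseteq> {cyc_edge n (cyc_pred n v), cyc_edge n v}"
  proof
    fix e assume "e \<in> {e \<in> cycle_edges n. v \<in> e}"
    then obtain i where i: "i < n" "e = cyc_edge n i" "v \<in> cyc_edge n i"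
      by (auto simp: cycle_edges_eq)
    then have "v = i \<or> i = cyc_pred n v"
      using cyc_pred_succ by (auto simp: cyc_edge_def)
    then show "e \<in> {cyc_edge n (cyc_pred n v), cyc_edge n v}"
      using i by blast
  qed
  show "{cyc_edge n (cyc_pred n v), cyc_edge n v} \<subseteq> {e \<in> cycle_edges n. v \<in> e}"
    using cyc_edge_in_cycle_edges[OF cyc_pred_lt[OF assms(2)]] cyc_edge_in_cycle_edges[OF assms(2)]
    by (simp add: cyc_edge_def cyc_succ_pred[OF assms(2)])
qed

lemma cyc_edge_pred_neq:
  assumes "3 \<le> n" "v < n"
  shows "cyc_edge n (cyc_pred n v) \<noteq> cyc_edge n v"
proof
  assume "cyc_edge n (cyc_pred n v) = cyc_edge n v"
  then have "cyc_pred n v = v"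
    using inj_onD[OF inj_on_cyc_edge[OF assms(1)]] cyc_pred_lt[OF assms(2)] assms(2) by blast
  then show False
    using cyc_succ_pred[OF assms(2)] cyc_succ_neq[of n v] assms(1) by simp
qed

definition cyc_traversals :: "nat \<Rightarrow> nat list \<Rightarrow> nat \<Rightarrow> nat" where
  "cyc_traversals n w j = traversals w (cyc_edge n j)"

lemma sum_incident_traversals_cycle:
  assumes "3 \<le> n" "v < n"
  shows "(\<Sum>e\<in>{e \<in> cycle_edges n. v \<in> e}. traversals w e)
    = cyc_traversals n w (cyc_pred n v) + cyc_traversals n w v"
  unfolding cyc_traversals_def incident_cyc_edges[OF assms]
  using cyc_edge_pred_neq[OF assms] by simp

lemma deg_plus_walk_cycle:
  assumes "3 \<le> n" "v < n"
  shows "deg_plus_walk (cycle_edges n) w v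
    = 2 + cyc_traversals n w (cyc_pred n v) + cyc_traversals n w v"
  unfolding deg_plus_walk_eq sum_incident_traversals_cycle[OF assms]
  using cyc_edge_pred_neq[OF assms] by (simp add: incident_cyc_edges[OF assms])

lemma sum_cyc_traversals_eq_walk_length:
  assumes "3 \<le> n" "is_walk (cycle_verts n) (cycle_edges n) w"
  shows "(\<Sum>j<n. cyc_traversals n w j) = walk_length w"
proof -
  have "(\<Sum>j<n. cyc_traversals n w j) = (\<Sum>e\<in>cycle_edges n. traversals w e)"
    unfolding cycle_edges_eq cyc_traversals_def
    by (simp add: sum.reindex[OF inj_on_cyc_edge[OF assms(1)]])
  also have "\<dots> = walk_length w"
    using assms(2) by (rule sum_traversals_eq_walk_length) (simp add: cycle_edges_eq)
  finally show ?thesis .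
qed

lemma all_cyc_succ_iff: "(\<forall>i<n. P i) \<longleftrightarrow> (\<forall>j<n. P (cyc_succ n j))"
proof
  show "\<forall>i<n. P i \<Longrightarrow> \<forall>j<n. P (cyc_succ n j)"
    using cyc_succ_lt by blast
  assume "\<forall>j<n. P (cyc_succ n j)"
  then have "P (cyc_succ n (cyc_pred n i))" if "i < n" for i
    using cyc_pred_lt[OF that] by blast
  then show "\<forall>i<n. P i"
    using cyc_succ_pred by simp
qed

lemma irregularising_cycle_iff:
  assumes "3 \<le> n" and walk: "is_walk (cycle_verts n) (cycle_edges n) w"
  shows "irregularising (cycle_verts n) (cycle_edges n) w \<longleftrightarrow>
    (\<forall>j<n. cyc_traversals n w j \<noteq> cyc_traversals n w (cyc_succ n (cyc_succ n j)))"
    (is "_ \<longleftrightarrow> (\<forall>j<n. ?x j \<noteq> ?x (cyc_succ n (cyc_succ n j)))")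
proof -
  let ?deg = "deg_plus_walk (cycle_edges n) w"
  have "irregularising (cycle_verts n) (cycle_edges n) w \<longleftrightarrow>
      (\<forall>i<n. ?deg i \<noteq> ?deg (cyc_succ n i))"
  proof
    assume "irregularising (cycle_verts n) (cycle_edges n) w"
    moreover have "{i, cyc_succ n i} \<in> cycle_edges n" "i \<noteq> cyc_succ n i" if "i < n" for i
      using cyc_edge_in_cycle_edges[OF that] cyc_succ_neq[of n i] assms(1)
      by (auto simp: cyc_edge_def)
    ultimately show "\<forall>i<n. ?deg i \<noteq> ?deg (cyc_succ n i)"
      unfolding irregularising_def by blast
  next
    assume deg: "\<forall>i<n. ?deg i \<noteq> ?deg (cyc_succ n i)"
    have "?deg u \<noteq> ?deg v" if "{u, v} \<in> cycle_edges n" for u v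
    proof -
      obtain i where "i < n" "{u, v} = {i, cyc_succ n i}"
        using \<open>{u, v} \<in> cycle_edges n\<close> by (auto simp: cycle_edges_eq cyc_edge_def)
      then show ?thesis
        using deg by (auto simp: doubleton_eq_iff)
    qed
    then show "irregularising (cycle_verts n) (cycle_edges n) w"
      unfolding irregularising_def using walk by blast
  qed
  also have "\<dots> \<longleftrightarrow> (\<forall>i<n. ?x (cyc_pred n i) \<noteq> ?x (cyc_succ n i))"
    using assms(1) cyc_succ_lt cyc_pred_succ by (simp add: deg_plus_walk_cycle)
  also have "\<dots> \<longleftrightarrow> (\<forall>j<n. ?x j \<noteq> ?x (cyc_succ n (cyc_succ n j)))"
    using cyc_pred_succ by (subst all_cyc_succ_iff) simp
  finally show ?thesis .
qed

section \<open>Lower bounds\<close>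

lemma card_odd_incident_traversals_le_2:
  assumes "3 \<le> n" and walk: "is_walk (cycle_verts n) (cycle_edges n) w"
  shows "card {v. v < n \<and> odd (cyc_traversals n w (cyc_pred n v) + cyc_traversals n w v)} \<le> 2"
proof -
  have fin: "finite (cycle_edges n)"
    by (simp add: cycle_edges_eq)
  have no_loop: "\<forall>u. {u} \<notin> cycle_edges n"
    using cycle_edges_no_loop assms(1) by simp
  have "{v. v < n \<and> odd (cyc_traversals n w (cyc_pred n v) + cyc_traversals n w v)}
      \<subseteq> {hd w, last w}"
  proof (rule subsetI, rule ccontr)
    fix v assume v: "v \<in> {v. v < n \<and> odd (cyc_traversals n w (cyc_pred n v) + cyc_traversals n w v)}"
      and "v \<notin> {hd w, last w}"
    then have "even (\<Sum>e\<in>{e \<in> cycle_edges n. v \<in> e}. traversals w e)"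
      using even_incident_traversals_plus_ends[OF walk fin no_loop, of v] by auto
    then show False
      using v sum_incident_traversals_cycle[OF assms(1), of v w] by simp
  qed
  moreover have "card {hd w, last w} \<le> 2"
    by (simp add: card_insert_if)
  ultimately show ?thesis
    by (meson card_mono finite.emptyI finite.insertI order.trans)
qed

lemma cycle_walk_stays_in_arc:
  assumes walk: "is_walk (cycle_verts n) (cycle_edges n) w"
    and "a < b" "b < n" "cyc_traversals n w a = 0" "cyc_traversals n w b = 0" "t < length w"
  shows "(a < w ! t \<and> w ! t \<le> b) \<longleftrightarrow> (a < w ! 0 \<and> w ! 0 \<le> b)"
proof (rule pred_nth_iff_pred_nth_0[OF _ \<open>t < length w\<close>], intro allI impI)
  fix k assume k: "Suc k < length w"
  obtain i where i: "i < n" "{w ! k, w ! Suc k} = {i, cyc_succ n i}"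
    using walk k unfolding is_walk_def cycle_edges_eq cyc_edge_def by blast
  have "i \<noteq> a" "i \<noteq> b"
    using traversals_pos[OF k] assms(4,5) i(2) by (auto simp: cyc_traversals_def cyc_edge_def)
  then have "(a < i \<and> i \<le> b) \<longleftrightarrow> (a < cyc_succ n i \<and> cyc_succ n i \<le> b)"
    using i(1) assms(2,3) by (auto simp: cyc_succ_def)
  then show "(a < w ! k \<and> w ! k \<le> b) \<longleftrightarrow> (a < w ! Suc k \<and> w ! Suc k \<le> b)"
    using i(2) by (auto simp: doubleton_eq_iff)
qed

lemma cyc_traversals_eq_0_if_unvisited:
  assumes "\<forall>u\<in>set w. P u" "\<not> P j"
  shows "cyc_traversals n w j = 0"
  using traversals_eq_0_if_outside[OF assms(1) _ assms(2)] by (simp add: cyc_traversals_def cyc_edge_def)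

lemma zero_cyc_traversals_adjacent:
  assumes "3 \<le> n" and walk: "is_walk (cycle_verts n) (cycle_edges n) w"
    and irr: "\<forall>j<n. cyc_traversals n w j \<noteq> cyc_traversals n w (cyc_succ n (cyc_succ n j))"
    and "a < b" "b < n" and zero: "cyc_traversals n w a = 0" "cyc_traversals n w b = 0"
  shows "b = Suc a \<or> (a = 0 \<and> Suc b = n)"
proof (cases "a < w ! 0 \<and> w ! 0 \<le> b")
  case True
  then have visited: "\<forall>u\<in>set w. a < u \<and> u \<le> b"
    using cycle_walk_stays_in_arc[OF walk \<open>a < b\<close> \<open>b < n\<close> zero] by (auto simp: in_set_conv_nth)
  show ?thesis
  proof (rule ccontr)
    assume "\<not> ?thesis"
    then have "\<not> (a < cyc_succ n (cyc_succ n b) \<and> cyc_succ n (cyc_succ n b) \<le> b)"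
      using assms(1,4,5) by (auto simp: cyc_succ_succ)
    then have "cyc_traversals n w (cyc_succ n (cyc_succ n b)) = 0"
      by (rule cyc_traversals_eq_0_if_unvisited[OF visited])
    then show False
      using irr[rule_format, of b] zero(2) \<open>b < n\<close> by simp
  qed
next
  case False
  then have unvisited: "\<forall>u\<in>set w. \<not> (a < u \<and> u \<le> b)"
    using cycle_walk_stays_in_arc[OF walk \<open>a < b\<close> \<open>b < n\<close> zero] by (auto simp: in_set_conv_nth)
  show ?thesis
  proof (rule ccontr)
    assume "\<not> ?thesis"
    then have "Suc (Suc a) \<le> b"
      using \<open>a < b\<close> by auto
    then have "cyc_succ n (cyc_succ n a) = Suc (Suc a)"
      using assms(1,5) by (simp add: cyc_succ_succ)
    moreover have "cyc_traversals n w (Suc (Suc a)) = 0"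
      using cyc_traversals_eq_0_if_unvisited[OF unvisited] \<open>Suc (Suc a) \<le> b\<close> by simp
    ultimately show False
      using irr[rule_format, of a] zero(1) assms(4,5) by simp
  qed
qed

lemma card_le_2_if_no_increasing_triple:
  fixes A :: "'a::linorder set"
  assumes "finite A" and no_triple: "\<And>a b c. a \<in> A \<Longrightarrow> b \<in> A \<Longrightarrow> c \<in> A \<Longrightarrow> a < b \<Longrightarrow> b < c \<Longrightarrow> False"
  shows "card A \<le> 2"
proof (rule ccontr)
  assume "\<not> card A \<le> 2"
  then have "A \<noteq> {}"
    by auto
  have "card A - card {Min A, Max A} \<le> card (A - {Min A, Max A})"
    by (rule diff_card_le_card_Diff) simp
  moreover have "card {Min A, Max A} \<le> 2"
    by (simp add: card_insert_if)
  ultimately have "A - {Min A, Max A} \<noteq> {}"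
    using \<open>\<not> card A \<le> 2\<close> by fastforce
  then obtain b where "b \<in> A" "b \<noteq> Min A" "b \<noteq> Max A"
    by blast
  then have "Min A < b" "b < Max A"
    using \<open>finite A\<close> by (simp_all add: order.not_eq_order_implies_strict)
  then show False
    using no_triple \<open>b \<in> A\<close> \<open>finite A\<close> \<open>A \<noteq> {}\<close> by (meson Max_in Min_in)
qed

lemma card_zero_cyc_traversals_le_2:
  assumes "3 \<le> n" and walk: "is_walk (cycle_verts n) (cycle_edges n) w"
    and irr: "\<forall>j<n. cyc_traversals n w j \<noteq> cyc_traversals n w (cyc_succ n (cyc_succ n j))"
  shows "card {j. j < n \<and> cyc_traversals n w j = 0} \<le> 2"
proof (rule card_le_2_if_no_increasing_triple)
  fix a b c assume "a \<in> {j. j < n \<and> cyc_traversals n w j = 0}" "b \<in> {j. j < n \<and> cyc_traversals n w j = 0}"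
    "c \<in> {j. j < n \<and> cyc_traversals n w j = 0}" "a < b" "b < c"
  then have "b = Suc a" "c = Suc b" "cyc_traversals n w a = 0" "cyc_traversals n w c = 0" "c < n"
    using zero_cyc_traversals_adjacent[OF assms, of a b] zero_cyc_traversals_adjacent[OF assms, of b c]
    by auto
  then show False
    using irr[rule_format, of a] assms(1) by (simp add: cyc_succ_succ)
qed simp

lemma card_odd_even_eq_card_even_odd:
  fixes x :: "nat \<Rightarrow> nat"
  shows "card {j. j < n \<and> odd (x j) \<and> even (x (cyc_succ n j))}
    = card {j. j < n \<and> even (x j) \<and> odd (x (cyc_succ n j))}"
proof -
  let ?both = "\<lambda>j. if odd (x j) \<and> odd (x (cyc_succ n j)) then 1 else (0::nat)"
  have "(\<Sum>j<n. ?both j) + card {j. j < n \<and> odd (x j) \<and> even (x (cyc_succ n j))}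
      = (\<Sum>j<n. if odd (x j) then 1 else 0)"
    unfolding card_Collect_less_eq_sum sum.distrib[symmetric] by (rule sum.cong) auto
  also have "\<dots> = (\<Sum>j<n. if odd (x (cyc_succ n j)) then 1 else 0)"
    by (rule sum_cyc_succ[symmetric])
  also have "\<dots> = (\<Sum>j<n. ?both j) + card {j. j < n \<and> even (x j) \<and> odd (x (cyc_succ n j))}"
    unfolding card_Collect_less_eq_sum sum.distrib[symmetric] by (rule sum.cong) auto
  finally show ?thesis
    by simp
qed

lemma card_odd_even_le_1:
  fixes x :: "nat \<Rightarrow> nat"
  assumes "card {v. v < n \<and> odd (x (cyc_pred n v) + x v)} \<le> 2"
  shows "card {j. j < n \<and> odd (x j) \<and> even (x (cyc_succ n j))} \<le> 1"
proof -
  define F where "F = {j. j < n \<and> odd (x j) \<and> even (x (cyc_succ n j))}"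
  define R where "R = {j. j < n \<and> even (x j) \<and> odd (x (cyc_succ n j))}"
  have "card F + card R = card (F \<union> R)"
    by (rule card_Un_disjoint[symmetric]) (auto simp: F_def R_def)
  also have "\<dots> = card (cyc_succ n ` (F \<union> R))"
    by (rule card_image[symmetric], rule inj_on_subset[OF inj_on_cyc_succ]) (auto simp: F_def R_def)
  also have "\<dots> \<le> card {v. v < n \<and> odd (x (cyc_pred n v) + x v)}"
    by (rule card_mono) (auto simp: F_def R_def cyc_succ_lt cyc_pred_succ)
  finally show ?thesis
    using assms card_odd_even_eq_card_even_odd[of n x] unfolding F_def R_def by simp
qed

lemma card_ones_le:
  fixes x :: "nat \<Rightarrow> nat"
  assumes irr: "\<forall>j<n. x j \<noteq> x (cyc_succ n (cyc_succ n j))"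
    and odd_vertices: "card {v. v < n \<and> odd (x (cyc_pred n v) + x v)} \<le> 2"
  shows "card {j. j < n \<and> x j = 1} \<le> card {j. j < n \<and> 3 \<le> x j} + 2"
proof -
  define F where "F = {j. j < n \<and> odd (x j) \<and> even (x (cyc_succ n j))}"
  define F' where "F' = {j. j < n \<and> cyc_succ n j \<in> F}"
  define B where "B = {j. j < n \<and> x j = 1 \<and> 3 \<le> x (cyc_succ n (cyc_succ n j))}"
  have "j \<in> B \<union> F \<union> F'" if "j < n" "x j = 1" for j
  proof -
    have "x (cyc_succ n (cyc_succ n j)) \<noteq> 1"
      using irr that by metis
    then have "3 \<le> x (cyc_succ n (cyc_succ n j)) \<or> even (x (cyc_succ n (cyc_succ n j)))"
      by presburger
    then show ?thesis
      using that cyc_succ_lt[OF \<open>j < n\<close>] by (auto simp: B_def F_def F'_def)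
  qed
  then have "card {j. j < n \<and> x j = 1} \<le> card (B \<union> F \<union> F')"
    by (intro card_mono) (auto simp: B_def F_def F'_def)
  also have "\<dots> \<le> card B + card F + card F'"
    by (metis card_Un_le add_le_mono1 order_trans)
  also have "card F' \<le> card F"
    by (rule card_inj_on_le[of "cyc_succ n"], rule inj_on_subset[OF inj_on_cyc_succ])
      (auto simp: F_def F'_def)
  also have "card B \<le> card {j. j < n \<and> 3 \<le> x j}"
    by (rule card_inj_on_le[of "\<lambda>j. cyc_succ n (cyc_succ n j)"],
        rule comp_inj_on[OF _ inj_on_subset[OF inj_on_cyc_succ], unfolded comp_def],
        rule inj_on_subset[OF inj_on_cyc_succ]) (auto simp: B_def cyc_succ_lt)
  also have "card F \<le> 1"
    using card_odd_even_le_1[OF odd_vertices] by (simp add: F_def)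
  finally show ?thesis
    by simp
qed

lemma cycle_sum_lower_bound:
  fixes x :: "nat \<Rightarrow> nat"
  assumes irr: "\<forall>j<n. x j \<noteq> x (cyc_succ n (cyc_succ n j))"
    and zeros: "card {j. j < n \<and> x j = 0} \<le> 2"
    and odd_vertices: "card {v. v < n \<and> odd (x (cyc_pred n v) + x v)} \<le> 2"
  shows "2 * n \<le> (\<Sum>j<n. x j) + 6"
proof -
  have "2 * n + card {j. j < n \<and> 3 \<le> x j} = (\<Sum>j<n. 2 + (if 3 \<le> x j then 1 else 0))"
    unfolding sum.distrib card_Collect_less_eq_sum by simp
  also have "\<dots> \<le> (\<Sum>j<n. x j + 2 * (if x j = 0 then 1 else 0) + (if x j = 1 then 1 else 0))"
    by (rule sum_mono) auto
  also have "\<dots> = (\<Sum>j<n. x j) + 2 * card {j. j < n \<and> x j = 0} + card {j. j < n \<and> x j = 1}"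
    by (simp add: card_Collect_less_eq_sum sum.distrib sum_distrib_left)
  finally show ?thesis
    using zeros card_ones_le[OF irr odd_vertices] by linarith
qed

lemma irregularising_cycle_walk_length_ge:
  assumes "3 \<le> n" and irregular: "irregularising (cycle_verts n) (cycle_edges n) w"
  shows "2 * n \<le> walk_length w + 6"
proof -
  have walk: "is_walk (cycle_verts n) (cycle_edges n) w"
    using irregular by (simp add: irregularising_def)
  have irr: "\<forall>j<n. cyc_traversals n w j \<noteq> cyc_traversals n w (cyc_succ n (cyc_succ n j))"
    using irregular irregularising_cycle_iff[OF assms(1) walk] by blast
  show ?thesis
    using cycle_sum_lower_bound[OF irr card_zero_cyc_traversals_le_2[OF assms(1) walk irr]
        card_odd_incident_traversals_le_2[OF assms(1) walk]]
    by (simp add: sum_cyc_traversals_eq_walk_length[OF assms(1) walk])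
qed

lemma irregularising_triangle_walk_length_ge:
  assumes irregular: "irregularising (cycle_verts 3) (cycle_edges 3) w"
  shows "3 \<le> walk_length w"
proof -
  let ?x = "cyc_traversals 3 w"
  have walk: "is_walk (cycle_verts 3) (cycle_edges 3) w"
    using irregular by (simp add: irregularising_def)
  have irr: "\<forall>j<3. ?x j \<noteq> ?x (cyc_succ 3 (cyc_succ 3 j))"
    using irregular irregularising_cycle_iff[OF _ walk] by simp
  have "?x 0 \<noteq> ?x 2" "?x 1 \<noteq> ?x 0" "?x 2 \<noteq> ?x 1"
    using irr[rule_format, of 0] irr[rule_format, of 1] irr[rule_format, of 2]
    by (simp_all add: cyc_succ_def numeral_2_eq_2)
  then have "3 \<le> ?x 0 + ?x 1 + ?x 2"
    by arith
  also have "\<dots> = walk_length w"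
    using sum_cyc_traversals_eq_walk_length[OF _ walk] by (simp add: lessThan_nat_numeral)
  finally show ?thesis .
qed

section \<open>Walks of minimum length\<close>

lemma traversals_upt: "traversals [a..<b] {j, Suc j} = (if a \<le> j \<and> Suc j < b then 1 else 0)"
proof (induction b)
  case (Suc b)
  show ?case
  proof (cases "a < b")
    case True
    have "traversals [a..<Suc b] {j, Suc j}
        = traversals [a..<b] {j, Suc j} + (if {b - 1, b} = {j, Suc j} then 1 else 0)"
      using True by (simp add: traversals_append)
    moreover have "{b - 1, b} = {j, Suc j} \<longleftrightarrow> j = b - 1"
      using True by (auto simp: doubleton_eq_iff)
    ultimately show ?thesis
      using Suc.IH True by (simp del: upt_Suc) linarith
  next
    case False
    then show ?thesis
      by (cases "a = b") auto
  qed
qed simp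

text \<open>The walk zigzag s e m goes down from s to 0, up to m with a detour j, j+1, j for every
  j with detour s e j, and down to e. For e = s + 4k + 2 its loads on the edges 0, ..., m - 1
  are 2^s (1 1 3 3)^k 1 1 2^(m - e).\<close>

definition detour :: "nat \<Rightarrow> nat \<Rightarrow> nat \<Rightarrow> bool" where
  "detour s e j \<longleftrightarrow> s \<le> j \<and> j < e \<and> 2 \<le> (j - s) mod 4"

definition sweep :: "nat \<Rightarrow> nat \<Rightarrow> nat \<Rightarrow> nat list" where
  "sweep s e k = concat (map (\<lambda>j. if detour s e j then [j, Suc j, j] else [j]) [0..<k])"

definition zigzag :: "nat \<Rightarrow> nat \<Rightarrow> nat \<Rightarrow> nat list" where
  "zigzag s e m = rev [1..<Suc s] @ sweep s e m @ rev [e..<Suc m]"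

definition zigzag_load :: "nat \<Rightarrow> nat \<Rightarrow> nat \<Rightarrow> nat" where
  "zigzag_load s e j =
    (if j < s then 1 else 0) + (if detour s e j then 2 else 0) + 1 + (if e \<le> j then 1 else 0)"

lemma sweep_0 [simp]: "sweep s e 0 = []"
  by (simp add: sweep_def)

lemma sweep_Suc:
  "sweep s e (Suc k) = sweep s e k @ (if detour s e k then [k, Suc k, k] else [k])"
  by (simp add: sweep_def)

lemma sweep_eq_Nil_iff [simp]: "sweep s e k = [] \<longleftrightarrow> k = 0"
  by (cases k) (simp_all add: sweep_Suc)

lemma hd_sweep: "0 < k \<Longrightarrow> hd (sweep s e k) = 0"
  by (induction k) (auto simp: sweep_Suc hd_append)

lemma last_sweep: "0 < k \<Longrightarrow> last (sweep s e k) = k - 1"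
  by (cases k) (simp_all add: sweep_Suc)

lemma set_sweep: "set (sweep s e k) \<subseteq> {..k}"
  by (induction k) (auto simp: sweep_Suc)

lemma length_sweep: "length (sweep s e k) = k + 2 * (\<Sum>j<k. if detour s e j then 1 else 0)"
  by (induction k) (simp_all add: sweep_Suc)

lemma traversals_sweep:
  "traversals (sweep s e k) {j, Suc j}
    = (if j < k \<and> detour s e j then 2 else 0) + (if Suc j < k then 1 else 0)"
proof (induction k)
  case (Suc k)
  have "traversals (if detour s e k then [k, Suc k, k] else [k]) {j, Suc j}
      = (if detour s e k \<and> j = k then 2 else 0)"
    by (auto simp: traversals_Cons_Cons doubleton_eq_iff)
  moreover have "{k - 1, k} = {j, Suc j} \<longleftrightarrow> j = k - 1" if "0 < k"
    using that by (auto simp: doubleton_eq_iff)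
  ultimately show ?case
    using Suc by (auto simp: sweep_Suc traversals_append last_sweep)
qed simp

lemma traversals_zigzag:
  assumes "0 < m" "e \<le> m" "j < m"
  shows "traversals (zigzag s e m) {j, Suc j} = zigzag_load s e j"
proof -
  define A where "A = rev [1..<Suc s]"
  define P where "P = sweep s e m"
  define C where "C = rev [e..<Suc m]"
  have "P \<noteq> [] \<and> C \<noteq> [] \<and> {last P, hd C} = {j, Suc j} \<longleftrightarrow> j = m - 1"
    using assms by (auto simp: P_def C_def last_sweep hd_rev doubleton_eq_iff)
  moreover have "traversals C {j, Suc j} = (if e \<le> j \<and> Suc j < Suc m then 1 else 0)"
    by (simp only: C_def traversals_rev traversals_upt)
  moreover have "traversals P {j, Suc j}
      = (if j < m \<and> detour s e j then 2 else 0) + (if Suc j < m then 1 else 0)"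
    by (simp only: P_def traversals_sweep)
  ultimately have PC: "traversals (P @ C) {j, Suc j}
      = (if detour s e j then 2 else 0) + 1 + (if e \<le> j then 1 else 0)"
    using assms by (simp only: traversals_append) auto
  have "hd (P @ C) = 0"
    using hd_sweep[OF assms(1)] assms(1) by (simp add: P_def)
  moreover have "last A = 1" if "0 < s"
    using that by (simp add: A_def last_rev hd_upt del: upt_Suc)
  ultimately have junction: "(A \<noteq> [] \<and> P @ C \<noteq> [] \<and> {last A, hd (P @ C)} = {j, Suc j})
      \<longleftrightarrow> 0 < s \<and> j = 0"
    using assms by (auto simp: A_def C_def doubleton_eq_iff)
  have A: "traversals A {j, Suc j} = (if 1 \<le> j \<and> Suc j < Suc s then 1 else 0)"
    by (simp only: A_def traversals_rev traversals_upt)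
  have "traversals (zigzag s e m) {j, Suc j} = traversals (A @ (P @ C)) {j, Suc j}"
    by (simp add: zigzag_def A_def P_def C_def)
  also have "\<dots> = (if 1 \<le> j \<and> Suc j < Suc s then 1 else 0)
      + ((if detour s e j then 2 else 0) + 1 + (if e \<le> j then 1 else 0))
      + (if 0 < s \<and> j = 0 then 1 else 0)"
    by (simp only: traversals_append[of A "P @ C"] A PC junction)
  also have "\<dots> = zigzag_load s e j"
    by (simp add: zigzag_load_def)
  finally show ?thesis .
qed

definition path_adjacent :: "nat \<Rightarrow> nat \<Rightarrow> bool" where
  "path_adjacent a b \<longleftrightarrow> b = Suc a \<or> a = Suc b"

lemma successively_path_adjacent_rev [simp]:
  "successively path_adjacent (rev w) \<longleftrightarrow> successively path_adjacent w"
proof -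
  have sym: "(\<lambda>a b. path_adjacent b a) = path_adjacent"
    by (auto simp: path_adjacent_def fun_eq_iff)
  show ?thesis
    by (simp only: successively_rev sym)
qed

lemma successively_path_adjacent_upt: "successively path_adjacent [a..<b]"
  by (induction b) (auto simp: successively_append_iff path_adjacent_def)

lemma successively_path_adjacent_sweep: "successively path_adjacent (sweep s e k)"
  by (induction k) (auto simp: sweep_Suc successively_append_iff path_adjacent_def last_sweep)

lemma successively_path_adjacent_zigzag:
  assumes "0 < m" "e \<le> m"
  shows "successively path_adjacent (zigzag s e m)"
proof -
  have "rev [1..<Suc s] = [] \<or>
      path_adjacent (last (rev [1..<Suc s])) (hd (sweep s e m @ rev [e..<Suc m]))"
    using assms by (cases s) (simp_all add: last_rev hd_sweep path_adjacent_def del: upt_Suc)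
  moreover have "path_adjacent (last (sweep s e m)) (hd (rev [e..<Suc m]))"
    using assms by (simp add: last_sweep hd_rev path_adjacent_def)
  ultimately show ?thesis
    unfolding zigzag_def successively_append_iff successively_path_adjacent_rev
    using successively_path_adjacent_sweep successively_path_adjacent_upt by blast
qed

lemma is_walk_cycle_if_path_adjacent:
  assumes "w \<noteq> []" "set w \<subseteq> {..<n}" "successively path_adjacent w"
  shows "is_walk (cycle_verts n) (cycle_edges n) w"
  unfolding is_walk_def
proof (intro conjI allI impI)
  fix t assume t: "Suc t < length w"
  then have "w ! t \<in> set w" "w ! Suc t \<in> set w"
    by simp_all
  then have "w ! t < n" "w ! Suc t < n"
    using assms(2) by auto
  moreover have "path_adjacent (w ! t) (w ! Suc t)"
    using successively_nth[OF assms(3) t] .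
  ultimately show "{w ! t, w ! Suc t} \<in> cycle_edges n"
    using cyc_edge_in_cycle_edges[of "w ! t" n] cyc_edge_in_cycle_edges[of "w ! Suc t" n]
    by (auto simp: path_adjacent_def cyc_edge_eq insert_commute)
qed (use assms in \<open>auto simp: cycle_verts_def\<close>)

lemma sum_mod_4_ge_2: "(\<Sum>i<4 * k. if 2 \<le> i mod 4 then 1 else 0) = (2::nat) * k"
proof (induction k)
  case (Suc k)
  have "4 * Suc k = Suc (Suc (Suc (Suc (4 * k))))"
    by simp
  moreover have "4 * k mod 4 = 0" "Suc (4 * k) mod 4 = 1" "Suc (Suc (4 * k)) mod 4 = 2"
      "Suc (Suc (Suc (4 * k))) mod 4 = 3"
    by presburger+
  ultimately show ?case
    using Suc by (simp only: sum.lessThan_Suc) simp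
qed simp

lemma sum_detour:
  assumes "e = s + 4 * k + 2" "e \<le> m"
  shows "(\<Sum>j<m. if detour s e j then 1 else 0) = 2 * k"
proof -
  let ?f = "\<lambda>i::nat. if 2 \<le> i mod 4 then 1 else (0::nat)"
  have "(\<Sum>j<m. if detour s e j then 1 else 0) = (\<Sum>j\<in>{s..<e}. ?f (j - s))"
    by (rule sum.mono_neutral_cong_right) (use assms in \<open>auto simp: detour_def\<close>)
  also have "\<dots> = (\<Sum>i<4 * k + 2. ?f i)"
    using sum.shift_bounds_nat_ivl[of "\<lambda>j. ?f (j - s)" 0 s "4 * k + 2"] assms(1)
    by (simp add: atLeast0LessThan add.commute)
  also have "\<dots> = 2 * k"
  proof -
    have "4 * k mod 4 = 0" "Suc (4 * k) mod 4 = 1"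
      by presburger+
    then show ?thesis
      using sum_mod_4_ge_2[of k] by simp
  qed
  finally show ?thesis .
qed

lemma walk_length_zigzag:
  assumes "e = s + 4 * k + 2" "e \<le> m"
  shows "walk_length (zigzag s e m) = 2 * m - 2"
  using assms by (auto simp: walk_length_def zigzag_def length_sweep sum_detour)

lemma mod_4_ge_2_iff: "2 \<le> (i::nat) mod 4 \<longleftrightarrow> \<not> 2 \<le> (i + 2) mod 4"
  by presburger

lemma zigzag_load_neq:
  assumes "s \<le> 2" "s + 2 \<le> e" "j < e"
  shows "zigzag_load s e j \<noteq> zigzag_load s e (Suc (Suc j))"
proof -
  consider "j < s" | "s \<le> j" "Suc (Suc j) < e" | "s \<le> j" "e \<le> Suc (Suc j)"
    by linarith
  then show ?thesis
  proof cases
    case 1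
    then show ?thesis
      using assms by (auto simp: zigzag_load_def detour_def)
  next
    case 2
    have "2 \<le> (j - s) mod 4 \<longleftrightarrow> \<not> 2 \<le> (j - s + 2) mod 4"
      by (rule mod_4_ge_2_iff)
    moreover have "Suc (Suc j) - s = j - s + 2"
      using 2 by simp
    ultimately have "detour s e j \<longleftrightarrow> \<not> detour s e (Suc (Suc j))"
      using 2 by (simp add: detour_def)
    then show ?thesis
      using 2 by (auto simp: zigzag_load_def)
  next
    case 3
    then show ?thesis
      using assms by (auto simp: zigzag_load_def detour_def)
  qed
qed

lemma is_walk_zigzag:
  assumes "0 < m" "Suc m < n" "s \<le> m" "e \<le> m"
  shows "is_walk (cycle_verts n) (cycle_edges n) (zigzag s e m)"
proof (rule is_walk_cycle_if_path_adjacent)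
  show "zigzag s e m \<noteq> []"
    using assms(4) by (simp add: zigzag_def)
  show "set (zigzag s e m) \<subseteq> {..<n}"
    using set_sweep[of s e m] assms(2,3) by (auto simp: zigzag_def)
  show "successively path_adjacent (zigzag s e m)"
    using assms(1,4) by (rule successively_path_adjacent_zigzag)
qed

lemma cyc_traversals_zigzag:
  assumes "0 < m" "Suc (Suc m) = n" "s \<le> m" "e \<le> m" "j < n"
  shows "cyc_traversals n (zigzag s e m) j = (if j < m then zigzag_load s e j else 0)"
proof (cases "j < m")
  case True
  then show ?thesis
    using traversals_zigzag[OF assms(1,4) True] assms(2) by (simp add: cyc_traversals_def cyc_edge_eq)
next
  case False
  have "\<forall>u\<in>set (zigzag s e m). u \<le> m"
    using set_sweep[of s e m] assms(3) by (auto simp: zigzag_def)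
  moreover have "Suc m \<in> cyc_edge n j"
    using False assms(2,5) by (auto simp: cyc_edge_def cyc_succ_def)
  ultimately show ?thesis
    using False traversals_eq_0_if_outside[of _ "\<lambda>u. u \<le> m" "Suc m"]
    by (simp add: cyc_traversals_def)
qed

lemma irregularising_zigzag:
  assumes "2 \<le> m" "Suc (Suc m) = n" "s \<le> 2" "s + 2 \<le> e" "e \<le> m" "m \<le> Suc e"
  shows "irregularising (cycle_verts n) (cycle_edges n) (zigzag s e m)"
proof -
  let ?x = "cyc_traversals n (zigzag s e m)"
  have x: "?x j = (if j < m then zigzag_load s e j else 0)" if "j < n" for j
    using cyc_traversals_zigzag[of m n s e j] that assms by simp
  have "?x j \<noteq> ?x (cyc_succ n (cyc_succ n j))" if "j < n" for j
  proof -
    consider "Suc (Suc j) < m" | "j < m" "m \<le> Suc (Suc j)" | "j = m" | "j = Suc m"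
      using \<open>j < n\<close> assms(2) by linarith
    then show ?thesis
    proof cases
      case 1
      then show ?thesis
        using x zigzag_load_neq[OF assms(3,4), of j] assms by (simp add: cyc_succ_succ)
    qed (use x assms in \<open>auto simp: cyc_succ_succ zigzag_load_def\<close>)
  qed
  then show ?thesis
    using irregularising_cycle_iff is_walk_zigzag assms by simp
qed

lemma irregularising_cycle_walk_exists:
  assumes "4 \<le> n"
  shows "\<exists>w. irregularising (cycle_verts n) (cycle_edges n) w \<and> walk_length w = 2 * n - 6"
proof -
  define m where "m = n - 2"
  define k where "k = (m - 2) div 4"
  define s where "s = min ((m - 2) mod 4) 2"
  define e where "e = s + 4 * k + 2"
  have m: "2 \<le> m" "Suc (Suc m) = n"
    using assms by (simp_all add: m_def)
  have "m - 2 = 4 * k + (m - 2) mod 4" "(m - 2) mod 4 < 4"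
    by (simp_all add: k_def)
  then have "s \<le> 2" "s + 2 \<le> e" "e \<le> m" "m \<le> Suc e"
    using m(1) unfolding e_def s_def by linarith+
  then have "irregularising (cycle_verts n) (cycle_edges n) (zigzag s e m)"
    using m by (intro irregularising_zigzag)
  moreover have "walk_length (zigzag s e m) = 2 * n - 6"
    using walk_length_zigzag[OF e_def \<open>e \<le> m\<close>] m by simp
  ultimately show ?thesis
    by blast
qed

lemma irregularising_triangle_walk_exists:
  "\<exists>w. irregularising (cycle_verts 3) (cycle_edges 3) w \<and> walk_length w = 3"
proof -
  define w :: "nat list" where "w = [1, 2, 0, 2]"
  have edges: "cyc_edge 3 1 = {1, 2}" "cyc_edge 3 2 = {2, 0}"
    by (simp_all add: cyc_edge_def cyc_succ_def numeral_2_eq_2)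
  have "{1, 2} \<in> cycle_edges 3" "{2, 0} \<in> cycle_edges 3" "{0, 2} \<in> cycle_edges (3::nat)"
    using cyc_edge_in_cycle_edges[of 1 3] cyc_edge_in_cycle_edges[of 2 3] edges
    by (simp_all add: insert_commute)
  then have walk: "is_walk (cycle_verts 3) (cycle_edges 3) w"
    by (auto simp: is_walk_def w_def cycle_verts_def less_Suc_eq nth_Cons')
  have "cyc_traversals 3 w 0 = 0" "cyc_traversals 3 w 1 = 1" "cyc_traversals 3 w 2 = 2"
    by (simp_all add: cyc_traversals_def cyc_edge_def cyc_succ_def w_def traversals_Cons_Cons
        doubleton_eq_iff)
  then have "\<forall>j<3. cyc_traversals 3 w j \<noteq> cyc_traversals 3 w (cyc_succ 3 (cyc_succ 3 j))"
    by (auto simp: less_Suc_eq numeral_3_eq_3 numeral_2_eq_2 cyc_succ_def)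
  then have "irregularising (cycle_verts 3) (cycle_edges 3) w"
    using irregularising_cycle_iff[OF _ walk] by simp
  moreover have "walk_length w = 3"
    by (simp add: walk_length_def w_def)
  ultimately show ?thesis
    by blast
qed

lemma MLW_eqI:
  assumes "\<exists>w. irregularising V E w \<and> walk_length w = p"
    and "\<And>w. irregularising V E w \<Longrightarrow> p \<le> walk_length w"
  shows "MLW V E = p"
  unfolding MLW_def using assms by (intro Least_equality) auto

theorem corollary5p6:
  fixes n :: nat
  assumes "n \<ge> 3"
  shows "MLW (cycle_verts n) (cycle_edges n) = (if n = 3 then 3 else 2 * n - 6)"
proof (cases "n = 3")
  case True
  then show ?thesis
    using irregularising_triangle_walk_exists irregularising_triangle_walk_length_ge
    by (simp add: MLW_eqI)
next
  case False
  then have "MLW (cycle_verts n) (cycle_edges n) = 2 * n - 6"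
    using assms irregularising_cycle_walk_exists irregularising_cycle_walk_length_ge
    by (intro MLW_eqI) fastforce+
  then show ?thesis
    using False by simp
qed

end
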